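(* Fix an association $\kappa$ in which every UE is served by at least one cell and every cell serves at least one UE, and fix a demand vector $\bm{d}\in\mathbb{R}^m_{>0}$. Let $\bm{p}\in\mathbb{R}^n_{>0}$, let $\alpha>1$, and set $\bm{p}'=\bm{p}/\alpha$. Let $\bm{x}$ be the fixed point $\bm{x}=\bm{f}(\bm{h}(\bm{x},\bm{p},\kappa),\bm{d},\kappa)$, and let $\bm{x}'$ be the fixed point $\bm{x}'=\bm{f}(\bm{h}(\bm{x}',\bm{p}',\kappa),\bm{d},\kappa)$. Then $\bm{x}'\ge\bm{x}$, that is, $x'_i\ge x_i$ for all $i\in\mathcal{I}$ and $\bm{x}'\neq\bm{x}$.
   Context: Cellular network model. $\mathcal{I}$ is a set of $n$ cells and $\mathcal{J}$ a set of $m$ UEs. For an association $\kappa\in\{0,1\}^{n\times m}$, let $\mathcal{I}_j=\{i:\kappa_{ij}=1\}$ and $\mathcal{J}_i=\{j:\kappa_{ij}=1\}$. $M,B>0$ are constants, $\sigma^2>0$ is the noise power and $g_{ij}>0$ are the channel gains. For $\bm{x}\in\mathbb{R}^n_{\ge0}$ and $\bm{p}\in\mathbb{R}^n_{>0}$: - $h_j(\bm{x},\bm{p},\kappa)=\dfrac{\sum_{i\in\mathcal{I}_j}p_ig_{ij}}{\sum_{k\in\mathcal{I}\setminus\mathcal{I}_j}p_kg_{kj}x_k+\sigma^2}$ (SINR of UE $j$); - $f_i(\bm{\gamma},\bm{d},\kappa)=\sum_{j\in\mathcal{J}_i}\dfrac{d_j}{MB\log_2(1+\gamma_j)}$ (load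 of cell $i$). It is known, and assumed here, that for fixed $\bm{p},\bm{d},\kappa$ the map $\bm{x}\mapsto\bm{f}(\bm{h}(\bm{x},\bm{p},\kappa),\bm{d},\kappa)$ is a standard interference function with a unique fixed point in $\mathbb{R}^n_{\ge0}$. The vector inequality $\bm{x}'\ge\bm{x}$ means componentwise $\ge$ with strict inequality in at least one component. *)

theory Defs
  imports Complex_Main
begin

text \<open>Cells are indexed by a finite type 'c, UEs by a finite type 'u.
  An association is kappa :: 'c => 'u => bool (kappa i j <-> kappa_ij = 1).\<close>

definition sinr ::
  "('c::finite \<Rightarrow> 'u \<Rightarrow> real) \<Rightarrow> real \<Rightarrow> ('c \<Rightarrow> real) \<Rightarrow> ('c \<Rightarrow> real)
     \<Rightarrow> ('c \<Rightarrow> 'u \<Rightarrow> bool) \<Rightarrow> 'u \<Rightarrow> real" where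
  "sinr g sigma2 x p kappa j =
     (\<Sum>i\<in>{i. kappa i j}. p i * g i j) /
     ((\<Sum>k\<in>{k. \<not> kappa k j}. p k * g k j * x k) + sigma2)"

definition load ::
  "real \<Rightarrow> real \<Rightarrow> ('u::finite \<Rightarrow> real) \<Rightarrow> ('u \<Rightarrow> real) \<Rightarrow> ('c \<Rightarrow> 'u \<Rightarrow> bool) \<Rightarrow> 'c \<Rightarrow> real" where
  "load M B gamma d kappa i =
     (\<Sum>j\<in>{j. kappa i j}. d j / (M * B * log 2 (1 + gamma j)))"

end

theory Submission
  imports Defs
begin

text \<open>With the interference-plus-noise u_j = \<Sum>k p_k g_kj x_k + \<sigma>^2, the load of a UE is an
  increasing function r_j(u_j), and it grows at most linearly under scaling: r_j(t u) \<le> t r_j(u)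
  for t \<ge> 1, because ln(1 + z) is concave. Scaling the power by 1/\<alpha> is the same as keeping p and
  multiplying the noise by \<alpha>. If some x_i exceeded x'_i, take the largest ratio t = x_i / x'_i > 1
  and a cell i attaining it; then x \<le> t x' gives, with I'_j the interference at x',
  x_i \<le> \<Sum>j r_j(t I'_j + \<sigma>^2) < \<Sum>j r_j(t (I'_j + \<sigma>^2)) \<le> t \<Sum>j r_j(I'_j + \<alpha>\<sigma>^2) = t x'_i = x_i,
  where the strict step uses that every cell serves a UE. Finally x' = x is impossible because
  the larger noise \<alpha>\<sigma>^2 strictly increases every load.\<close>

lemma fixed_point_le_fixed_point_if_scalable:
  fixes T T' :: "('c::finite \<Rightarrow> real) \<Rightarrow> 'c \<Rightarrow> real" and x x' :: "'c \<Rightarrow> real"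
  assumes x_fix: "T x = x" and x'_fix: "T' x' = x'"
    and x_nonneg: "\<forall>i. 0 \<le> x i" and x'_pos: "\<forall>i. 0 < x' i"
    and mono: "\<And>y z i. \<forall>k. 0 \<le> y k \<Longrightarrow> \<forall>k. y k \<le> z k \<Longrightarrow> T y i \<le> T z i"
    and scalable: "\<And>y t i. \<forall>k. 0 \<le> y k \<Longrightarrow> t > 1 \<Longrightarrow> T (\<lambda>k. t * y k) i < t * T' y i"
  shows "x i \<le> x' i"
proof (rule ccontr)
  assume "\<not> x i \<le> x' i"
  define t where "t = Max (range (\<lambda>k. x k / x' k))"
  have ratio_le: "x k / x' k \<le> t" for k unfolding t_def by (rule Max_ge) auto
  have "t \<in> range (\<lambda>k. x k / x' k)" unfolding t_def by (rule Max_in) auto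
  then obtain i0 where i0: "t = x i0 / x' i0" by blast
  have "1 < x i / x' i" using \<open>\<not> x i \<le> x' i\<close> x'_pos by simp
  then have t: "t > 1" using ratio_le[of i] by linarith
  have x_le: "x k \<le> t * x' k" for k using ratio_le[of k] x'_pos by (simp add: divide_le_eq)
  have "x i0 \<le> T (\<lambda>k. t * x' k) i0"
    using mono[OF x_nonneg] x_le x_fix by metis
  also have "\<dots> < t * x' i0" using scalable[of x' t i0] x'_pos t x'_fix by (simp add: less_imp_le)
  also have "\<dots> = x i0" using i0 x'_pos by (simp add: less_imp_neq[symmetric])
  finally show False by simp
qed

lemma ln_one_plus_le_scaled:
  fixes t u :: real
  assumes t: "t \<ge> 1" and u: "u \<ge> 0"
  shows "ln (1 + u) \<le> t * ln (1 + u / t)"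
proof -
  let ?h = "\<lambda>v. t * ln (1 + v / t) - ln (1 + v)"
  have "?h 0 \<le> ?h u"
  proof (rule DERIV_nonneg_imp_nondecreasing[OF u])
    fix v :: real assume v: "0 \<le> v" "v \<le> u"
    have "DERIV ?h v :> 1 / (1 + v / t) - 1 / (1 + v)"
      using t v by (auto intro!: derivative_eq_intros simp: field_simps)
    moreover have "1 / (1 + v) \<le> 1 / (1 + v / t)"
      using t v by (intro divide_left_mono) (auto simp: divide_le_eq add_pos_nonneg mult_le_cancel_left1)
    ultimately show "\<exists>y. DERIV ?h v :> y \<and> y \<ge> 0" by force
  qed
  then show ?thesis by simp
qed

definition unit_load :: "real \<Rightarrow> real \<Rightarrow> real \<Rightarrow> real" where
  "unit_load c S u = c / log 2 (1 + S / u)"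

context
  fixes c S :: real
  assumes c: "c > 0" and S: "S > 0"
begin

lemma unit_load_pos: "u > 0 \<Longrightarrow> unit_load c S u > 0"
  using c S by (simp add: unit_load_def add_pos_pos)

lemma unit_load_strict_mono:
  assumes "0 < u" "u < v"
  shows "unit_load c S u < unit_load c S v"
proof -
  have "log 2 (1 + S / v) < log 2 (1 + S / u)"
    using assms S by (simp add: frac_less2 add_pos_pos)
  moreover have "0 < log 2 (1 + S / v)" using assms S by (simp add: add_pos_pos)
  ultimately show ?thesis using c by (simp add: unit_load_def divide_strict_left_mono)
qed

lemma unit_load_mono: "0 < u \<Longrightarrow> u \<le> v \<Longrightarrow> unit_load c S u \<le> unit_load c S v"
  using unit_load_strict_mono[of u v] by (cases "u = v") auto

lemma unit_load_scale_le:
  assumes u: "u > 0" and t: "t \<ge> 1"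
  shows "unit_load c S (t * u) \<le> t * unit_load c S u"
proof -
  have "ln (1 + S / u) \<le> t * ln (1 + S / (t * u))"
    using ln_one_plus_le_scaled[OF t, of "S / u"] S u by (simp add: mult.commute)
  then have log_le: "log 2 (1 + S / u) \<le> t * log 2 (1 + S / (t * u))"
    by (simp add: log_def divide_right_mono)
  have "0 < S / (t * u)" using S u t by simp
  then have "0 < log 2 (1 + S / (t * u))" by simp
  moreover have "0 < log 2 (1 + S / u)" using S u by (simp add: add_pos_pos)
  ultimately have "t * c / (t * log 2 (1 + S / (t * u))) \<le> t * c / log 2 (1 + S / u)"
    using log_le t c by (intro divide_left_mono) auto
  then show ?thesis using t by (simp add: unit_load_def)
qed

text \<open>The step of the proof where the noise is both scaled and enlarged; strictness comes
  from the noise term, which is not scaled on the left.\<close>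
lemma unit_load_scaled_interference_less:
  assumes I: "0 \<le> I" "I \<le> t * I'" and I': "0 \<le> I'" and t: "t > 1"
    and s: "s > 0" and \<alpha>: "\<alpha> \<ge> 1"
  shows "unit_load c S (I + s) < t * unit_load c S (I' + \<alpha> * s)"
proof -
  have "unit_load c S (I + s) \<le> unit_load c S (t * I' + s)"
    using I s by (intro unit_load_mono) auto
  also have "\<dots> < unit_load c S (t * (I' + s))"
    using t s I' by (intro unit_load_strict_mono) (auto simp: distrib_left intro: add_nonneg_pos)
  also have "\<dots> \<le> t * unit_load c S (I' + s)"
    using I' s t by (intro unit_load_scale_le) auto
  also have "\<dots> \<le> t * unit_load c S (I' + \<alpha> * s)"
    using t I' s \<alpha> by (intro mult_left_mono unit_load_mono) auto
  finally show ?thesis .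
qed

end

definition signal :: "('c::finite \<Rightarrow> 'u \<Rightarrow> real) \<Rightarrow> ('c \<Rightarrow> real) \<Rightarrow> ('c \<Rightarrow> 'u \<Rightarrow> bool) \<Rightarrow> 'u \<Rightarrow> real"
  where "signal g p kappa j = (\<Sum>i\<in>{i. kappa i j}. p i * g i j)"

definition interference ::
  "('c::finite \<Rightarrow> 'u \<Rightarrow> real) \<Rightarrow> ('c \<Rightarrow> real) \<Rightarrow> ('c \<Rightarrow> 'u \<Rightarrow> bool) \<Rightarrow> ('c \<Rightarrow> real) \<Rightarrow> 'u \<Rightarrow> real"
  where "interference g p kappa x j = (\<Sum>k\<in>{k. \<not> kappa k j}. p k * g k j * x k)"

lemma sinr_eq:
  "sinr g sigma2 x p kappa = (\<lambda>j. signal g p kappa j / (interference g p kappa x j + sigma2))"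
  by (simp add: fun_eq_iff sinr_def signal_def interference_def)

lemma sinr_power_divide:
  assumes "alpha > 0"
  shows "sinr g sigma2 x (\<lambda>k. p k / alpha) kappa
           = (\<lambda>j. signal g p kappa j / (interference g p kappa x j + alpha * sigma2))"
proof
  fix j
  have "sinr g sigma2 x (\<lambda>k. p k / alpha) kappa j
          = (signal g p kappa j / alpha) / (interference g p kappa x j / alpha + sigma2)"
    by (simp add: sinr_def signal_def interference_def sum_divide_distrib)
  then show "sinr g sigma2 x (\<lambda>k. p k / alpha) kappa j
           = signal g p kappa j / (interference g p kappa x j + alpha * sigma2)"
    using assms by (simp add: field_simps)
qed

lemma load_eq_sum_unit_load:
  "load M B (\<lambda>j. S j / u j) d kappa i = (\<Sum>j\<in>{j. kappa i j}. unit_load (d j / (M * B)) (S j) (u j))"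
  by (simp add: load_def unit_load_def)

lemma signal_pos:
  assumes "\<forall>i j. g i j > 0" "\<forall>i. p i > 0" "kappa i j"
  shows "signal g p kappa j > 0"
  unfolding signal_def using assms by (intro sum_pos2[of _ i]) (auto intro: less_imp_le)

lemma interference_nonneg:
  "\<forall>i j. g i j > 0 \<Longrightarrow> \<forall>i. p i > 0 \<Longrightarrow> \<forall>k. x k \<ge> 0 \<Longrightarrow> interference g p kappa x j \<ge> 0"
  unfolding interference_def by (intro sum_nonneg) (simp add: less_imp_le)

lemma interference_mono:
  "\<forall>i j. g i j > 0 \<Longrightarrow> \<forall>i. p i > 0 \<Longrightarrow> \<forall>k. x k \<le> y k
     \<Longrightarrow> interference g p kappa x j \<le> interference g p kappa y j"
  unfolding interference_def by (intro sum_mono) (simp add: less_imp_le)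

lemma interference_scale:
  "interference g p kappa (\<lambda>k. t * x k) j = t * interference g p kappa x j"
  by (simp add: interference_def sum_distrib_left mult_ac)

theorem lemma3:
  fixes kappa :: "'c::finite \<Rightarrow> 'u::finite \<Rightarrow> bool"
    and g :: "'c \<Rightarrow> 'u \<Rightarrow> real"
    and d :: "'u \<Rightarrow> real"
    and p x x' :: "'c \<Rightarrow> real"
    and M B sigma2 alpha :: real
  assumes M: "M > 0" and B: "B > 0" and sigma2: "sigma2 > 0"
    and g: "\<forall>i j. g i j > 0"
    and ue_served: "\<forall>j. \<exists>i. kappa i j"
    and cell_serves: "\<forall>i. \<exists>j. kappa i j"
    and d: "\<forall>j. d j > 0"
    and p: "\<forall>i. p i > 0"
    and alpha: "alpha > 1"
    and x_nonneg: "\<forall>i. x i \<ge> 0"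
    and x_fix: "x = (\<lambda>i. load M B (sinr g sigma2 x p kappa) d kappa i)"
    and x'_nonneg: "\<forall>i. x' i \<ge> 0"
    and x'_fix: "x' = (\<lambda>i. load M B (sinr g sigma2 x' (\<lambda>k. p k / alpha) kappa) d kappa i)"
  shows "(\<forall>i. x' i \<ge> x i) \<and> x' \<noteq> x"
proof -
  define r where "r j = unit_load (d j / (M * B)) (signal g p kappa j)" for j
  define T where "T s y i = (\<Sum>j\<in>{j. kappa i j}. r j (interference g p kappa y j + s))" for s y i
  have r_intros: "d j / (M * B) > 0" "signal g p kappa j > 0" for j
    using d M B ue_served signal_pos[OF g p, of kappa _ j] by auto
  have serves: "{j. kappa i j} \<noteq> {}" for i using cell_serves by auto
  have I_nonneg: "\<forall>k. y k \<ge> 0 \<Longrightarrow> interference g p kappa y j \<ge> 0" for y j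
    using interference_nonneg[OF g p] .
  have x_eq: "T sigma2 x = x"
    by (subst (2) x_fix) (simp add: fun_eq_iff T_def r_def sinr_eq load_eq_sum_unit_load)
  have x'_eq: "T (alpha * sigma2) x' = x'"
    using alpha by (subst (2) x'_fix) (simp add: fun_eq_iff T_def r_def sinr_power_divide load_eq_sum_unit_load)
  have noise_less: "T sigma2 y i < T (alpha * sigma2) y i" if "\<forall>k. y k \<ge> 0" for y i
    unfolding T_def r_def using serves[of i] I_nonneg[OF that] sigma2 alpha
    by (intro sum_strict_mono unit_load_strict_mono r_intros) (auto intro: add_nonneg_pos)
  have x'_pos: "\<forall>i. x' i > 0"
  proof
    fix i
    have "T (alpha * sigma2) x' i > 0"
      unfolding T_def r_def using serves[of i] I_nonneg[OF x'_nonneg] sigma2 alpha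
      by (intro sum_pos unit_load_pos r_intros) (auto intro: add_nonneg_pos)
    then show "x' i > 0" using x'_eq by simp
  qed
  have "x i \<le> x' i" for i
  proof (rule fixed_point_le_fixed_point_if_scalable[where T = "T sigma2" and T' = "T (alpha * sigma2)",
        OF x_eq x'_eq x_nonneg x'_pos])
    fix y z :: "'c \<Rightarrow> real" and i assume "\<forall>k. 0 \<le> y k" "\<forall>k. y k \<le> z k"
    then show "T sigma2 y i \<le> T sigma2 z i"
      unfolding T_def r_def using sigma2 I_nonneg interference_mono[OF g p]
      by (intro sum_mono unit_load_mono r_intros) (auto intro: add_nonneg_pos)
  next
    fix y :: "'c \<Rightarrow> real" and t :: real and i assume y: "\<forall>k. 0 \<le> y k" and t: "t > 1"
    then show "T sigma2 (\<lambda>k. t * y k) i < t * T (alpha * sigma2) y i"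
      unfolding T_def r_def sum_distrib_left interference_scale using serves[of i] sigma2 alpha
      by (intro sum_strict_mono unit_load_scaled_interference_less r_intros I_nonneg[OF y])
        (auto intro: mult_nonneg_nonneg I_nonneg[OF y])
  qed
  moreover have "x' \<noteq> x"
  proof
    assume "x' = x"
    then have "T (alpha * sigma2) x = T sigma2 x" using x_eq x'_eq by simp
    then show False using noise_less[OF x_nonneg] by (metis less_irrefl)
  qed
  ultimately show ?thesis by blast
qed

end
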